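(* Let $n\geq 2$ and let $L'_n$ be the graph of the $\alpha,\omega$-dicyclobutadieno derivative of $[n-1]$-phenylene (defined in the context). Then the base polynomial counting distances between pairs of degree-2 vertices of $L'_n$ is \begin{eqnarray*} H^{2,2}_{b}(L'_{n}) &=& 2x+(3n-1)x^{3}+2\sum_{k=2}^{n-1}(n-k)x^{3k-2}+4\sum_{k=1}^{n-1}x^{3k-1}\\ &&+2\sum_{k=2}^{n-1}(n-k+1)x^{3k}+2x^{3n-2}+2x^{3n-1}. \end{eqnarray*}
   Context: All graphs are finite, simple and connected; $d(u,v)$ denotes the shortest-path distance and $d_u$ the degree of a vertex $u$. For a graph $G$ and a degree $p$, the base polynomial is $H^{p,p}_{b}(G)=\sum x^{d(u,v)}$, where the sum runs over all unordered pairs $\{u,v\}$ of distinct vertices of $G$ both of degree $p$. Construction of $L'_n$ ($n\ge 2$): take $n-1$ hexagons $H_1,\dots,H_{n-1}$, hexagon $H_i$ being the 6-cycle $a_i b_i c_i d_i e_i f_i a_i$, and for $i=1,\dots,n-2$ add edges $b_i f_{i+1}$ and $c_i e_{i+1}$ (so consecutive hexagons are joined by the 4-cycle $b_i c_i e_{i+1} f_{i+1}$). Then add four new vertices $p,q,r,s$ with edges $pq$, $pf_1$, $qe_1$ (forming the 4-cycle $f_1 e_1 q p$) and $rs$, $rb_{n-1}$, $sc_{n-1}$ (forming the 4-cycle $b_{n-1} c_{n-1} s r$). Thus $L'_n$ has $n-1$ hexagons and $n$ squares, $2n+2$ vertices of degree 2 and $4n-4$ vertices of degree 3. *)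

theory Defs
  imports "HOL-Computational_Algebra.Polynomial"
begin

definition walk :: "'a set \<Rightarrow> ('a \<Rightarrow> 'a \<Rightarrow> bool) \<Rightarrow> 'a list \<Rightarrow> bool" where
  "walk V E xs \<longleftrightarrow> xs \<noteq> [] \<and> set xs \<subseteq> V \<and>
     (\<forall>i. Suc i < length xs \<longrightarrow> E (xs ! i) (xs ! Suc i))"

definition gdist :: "'a set \<Rightarrow> ('a \<Rightarrow> 'a \<Rightarrow> bool) \<Rightarrow> 'a \<Rightarrow> 'a \<Rightarrow> nat" where
  "gdist V E u v = (LEAST k. \<exists>xs. walk V E xs \<and> hd xs = u \<and> last xs = v \<and> length xs = Suc k)"

definition gdegree :: "'a set \<Rightarrow> ('a \<Rightarrow> 'a \<Rightarrow> bool) \<Rightarrow> 'a \<Rightarrow> nat" where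
  "gdegree V E u = card {w \<in> V. E u w}"

definition deg_pairs :: "'a set \<Rightarrow> ('a \<Rightarrow> 'a \<Rightarrow> bool) \<Rightarrow> nat \<Rightarrow> 'a set set" where
  "deg_pairs V E p = {{u, v} | u v. u \<in> V \<and> v \<in> V \<and> u \<noteq> v \<and>
       gdegree V E u = p \<and> gdegree V E v = p}"

text \<open>Distance between the two endpoints of an unordered pair (well defined since
  distances in an undirected graph are symmetric).\<close>
definition pair_dist :: "'a set \<Rightarrow> ('a \<Rightarrow> 'a \<Rightarrow> bool) \<Rightarrow> 'a set \<Rightarrow> nat" where
  "pair_dist V E e = (THE d. \<exists>u v. e = {u, v} \<and> u \<noteq> v \<and> d = gdist V E u v)"

definition base_poly :: "'a set \<Rightarrow> ('a \<Rightarrow> 'a \<Rightarrow> bool) \<Rightarrow> nat \<Rightarrow> nat poly" where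
  "base_poly V E p = (\<Sum>e\<in>deg_pairs V E p. monom 1 (pair_dist V E e))"

datatype lvert = Av nat | Bv nat | Cv nat | Dv nat | Ev nat | Fv nat
  | Pv | Qv | Rv | Sv

definition Lverts :: "nat \<Rightarrow> lvert set" where
  "Lverts n = (\<Union>i\<in>{1..n-1}. {Av i, Bv i, Cv i, Dv i, Ev i, Fv i}) \<union> {Pv, Qv, Rv, Sv}"

definition Ledges :: "nat \<Rightarrow> lvert set set" where
  "Ledges n =
     (\<Union>i\<in>{1..n-1}. {{Av i, Bv i}, {Bv i, Cv i}, {Cv i, Dv i}, {Dv i, Ev i},
                     {Ev i, Fv i}, {Fv i, Av i}})
   \<union> (\<Union>i\<in>{1..n-2}. {{Bv i, Fv (i+1)}, {Cv i, Ev (i+1)}})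
   \<union> {{Pv, Qv}, {Pv, Fv 1}, {Qv, Ev 1}, {Rv, Sv}, {Rv, Bv (n-1)}, {Sv, Cv (n-1)}}"

definition Ladj :: "nat \<Rightarrow> lvert \<Rightarrow> lvert \<Rightarrow> bool" where
  "Ladj n u v \<longleftrightarrow> u \<noteq> v \<and> {u, v} \<in> Ledges n"

end

theory Submission
  imports Defs "HOL-Library.Product_Lexorder"
begin

text \<open>Reading the two boundary paths \<open>P F\<^sub>1 A\<^sub>1 B\<^sub>1 F\<^sub>2 \<dots> B\<^bsub>n-1\<^esub> R\<close> and
  \<open>Q E\<^sub>1 D\<^sub>1 C\<^sub>1 E\<^sub>2 \<dots> C\<^bsub>n-1\<^esub> S\<close> of \<open>L'\<^sub>n\<close> as positions \<open>2, 3, \<dots>, 3n\<close> exhibits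
  \<open>L'\<^sub>n\<close> as a ladder whose rungs join equal positions, except that the rungs at the positions
  \<open>3i + 1\<close> (between \<open>A\<^sub>i\<close> and \<open>D\<^sub>i\<close>) are missing. Distances in this ladder are explicit:
  \<open>|x - y|\<close>, plus one for changing sides, except that the two ends of a missing rung are at
  distance 3. The vertices of degree 2 are the ends of the missing rungs and of the end rungs at
  positions 2 and \<open>3n\<close>. Each pair of these rungs at distance \<open>d\<close> contributes
  \<open>2x\<^sup>d + 2x\<^sup>d\<^sup>+\<^sup>1\<close>, each single rung contributes \<open>x\<close> or \<open>x\<^sup>3\<close>, and collecting
  the distances \<open>3k - 1\<close>, \<open>3k\<close>, \<open>3k + 1\<close> gives the formula.\<close>

section \<open>Distances in graphs and graph isomorphisms\<close>

lemma walk_snoc: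
  assumes "walk V E xs" "E (last xs) v" "v \<in> V"
  shows "walk V E (xs @ [v])"
  unfolding walk_def
proof (intro conjI allI impI)
  show "set (xs @ [v]) \<subseteq> V" using assms by (auto simp: walk_def)
  fix i assume i: "Suc i < length (xs @ [v])"
  show "E ((xs @ [v]) ! i) ((xs @ [v]) ! Suc i)"
  proof (cases "Suc i < length xs")
    case True
    then show ?thesis using assms(1) by (auto simp: walk_def nth_append)
  next
    case False
    then have "i = length xs - 1" "xs \<noteq> []" using i assms(1) by (auto simp: walk_def)
    then show ?thesis using assms(2) by (auto simp: nth_append last_conv_nth)
  qed
qed simp

lemma gdist_eqI:
  assumes "u \<in> V" "v \<in> V" and D_u: "D u = 0"
    and D_edge: "\<And>x y. x \<in> V \<Longrightarrow> y \<in> V \<Longrightarrow> E x y \<Longrightarrow> D y \<le> D x + 1"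
    and D_pred: "\<And>y. y \<in> V \<Longrightarrow> y \<noteq> u \<Longrightarrow> \<exists>x\<in>V. E x y \<and> D x + 1 = D y"
  shows "gdist V E u v = D v"
proof -
  have D_le_index: "D (xs ! i) \<le> i" if xs: "walk V E xs" "hd xs = u" and "i < length xs" for xs i
    using \<open>i < length xs\<close>
  proof (induction i)
    case 0
    then show ?case using xs D_u by (simp add: hd_conv_nth)
  next
    case (Suc i)
    then have "D (xs ! Suc i) \<le> D (xs ! i) + 1"
      using xs(1) by (intro D_edge) (auto simp: walk_def)
    then show ?case using Suc by simp
  qed
  have walk_exists: "\<exists>xs. walk V E xs \<and> hd xs = u \<and> last xs = w \<and> length xs = Suc (D w)"
    if "w \<in> V" for w
    using that
  proof (induction "D w" arbitrary: w)
    case 0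
    then have "w = u" using D_pred by fastforce
    then show ?case using \<open>u \<in> V\<close> D_u by (intro exI[of _ "[u]"]) (auto simp: walk_def)
  next
    case (Suc k)
    then have "w \<noteq> u" using D_u by auto
    then obtain x where x: "x \<in> V" "E x w" "D x + 1 = D w" using D_pred Suc.prems by blast
    moreover have "k = D x" using x(3) Suc.hyps(2) by simp
    ultimately obtain xs where xs: "walk V E xs" "hd xs = u" "last xs = x" "length xs = Suc (D x)"
      using Suc.hyps(1) by blast
    then show ?case
      using walk_snoc[of V E xs w] x Suc.prems by (intro exI[of _ "xs @ [w]"]) (auto simp: walk_def)
  qed
  show ?thesis unfolding gdist_def
  proof (rule Least_equality)
    fix k assume "\<exists>xs. walk V E xs \<and> hd xs = u \<and> last xs = v \<and> length xs = Suc k"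
    then obtain xs where xs: "walk V E xs" "hd xs = u" "last xs = v" "length xs = Suc k" by blast
    moreover have "xs \<noteq> []" using xs(4) by auto
    ultimately have "last xs = xs ! k" by (simp add: last_conv_nth)
    then show "D v \<le> k" using D_le_index[OF xs(1,2), of k] xs by simp
  qed (use walk_exists \<open>v \<in> V\<close> in blast)
qed

lemma pair_dist_doubleton:
  assumes "gdist V E u v = gdist V E v u" "u \<noteq> v"
  shows "pair_dist V E {u, v} = gdist V E u v"
  unfolding pair_dist_def
proof (rule the_equality)
  fix d assume "\<exists>x y. {u, v} = {x, y} \<and> x \<noteq> y \<and> d = gdist V E x y"
  then show "d = gdist V E u v" using assms(1) by (auto simp: doubleton_eq_iff)
qed (use assms(2) in blast)

lemma deg_pairs_subset: "e \<in> deg_pairs V E p \<Longrightarrow> e \<subseteq> V"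
  by (auto simp: deg_pairs_def)

locale graph_iso =
  fixes V :: "'a set" and E :: "'a \<Rightarrow> 'a \<Rightarrow> bool"
    and W :: "'b set" and E' :: "'b \<Rightarrow> 'b \<Rightarrow> bool" and f :: "'a \<Rightarrow> 'b"
  assumes bij: "bij_betw f V W"
    and adj_iff: "\<And>x y. x \<in> V \<Longrightarrow> y \<in> V \<Longrightarrow> E' (f x) (f y) \<longleftrightarrow> E x y"
begin

lemma inj: "inj_on f V"
  using bij by (rule bij_betw_imp_inj_on)

lemma image_eq: "f ` V = W"
  using bij by (rule bij_betw_imp_surj_on)

lemma walk_map_iff:
  "set xs \<subseteq> V \<Longrightarrow> walk W E' (map f xs) \<longleftrightarrow> walk V E xs"
  using image_eq adj_iff by (auto simp: walk_def subset_iff)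

lemma gdist_eq:
  assumes "u \<in> V" "v \<in> V"
  shows "gdist W E' (f u) (f v) = gdist V E u v"
proof -
  have "(\<exists>ys. walk W E' ys \<and> hd ys = f u \<and> last ys = f v \<and> length ys = Suc k) \<longleftrightarrow>
        (\<exists>xs. walk V E xs \<and> hd xs = u \<and> last xs = v \<and> length xs = Suc k)" for k
  proof
    assume "\<exists>ys. walk W E' ys \<and> hd ys = f u \<and> last ys = f v \<and> length ys = Suc k"
    then obtain ys where ys: "walk W E' ys" "hd ys = f u" "last ys = f v" "length ys = Suc k"
      by blast
    define xs where "xs = map (inv_into V f) ys"
    have "set ys \<subseteq> f ` V" using ys(1) image_eq by (simp add: walk_def)
    then have xs: "set xs \<subseteq> V" "map f xs = ys"
      by (auto simp: xs_def inv_into_into f_inv_into_f intro!: map_idI)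
    have "ys \<noteq> []" using ys(4) by auto
    then have "hd xs = u" "last xs = v"
      using ys(2,3) assms inj by (auto simp: xs_def hd_map last_map)
    then show "\<exists>xs. walk V E xs \<and> hd xs = u \<and> last xs = v \<and> length xs = Suc k"
      using walk_map_iff[OF xs(1)] ys xs by (intro exI[of _ xs]) auto
  next
    assume "\<exists>xs. walk V E xs \<and> hd xs = u \<and> last xs = v \<and> length xs = Suc k"
    then obtain xs where xs: "walk V E xs" "hd xs = u" "last xs = v" "length xs = Suc k"
      by blast
    then have "walk W E' (map f xs)"
      using walk_map_iff[of xs] by (simp add: walk_def)
    moreover have "xs \<noteq> []" using xs(4) by auto
    ultimately show "\<exists>ys. walk W E' ys \<and> hd ys = f u \<and> last ys = f v \<and> length ys = Suc k"
      using xs by (intro exI[of _ "map f xs"]) (auto simp: hd_map last_map)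
  qed
  then show ?thesis by (simp add: gdist_def)
qed

lemma gdegree_eq:
  assumes "u \<in> V"
  shows "gdegree W E' (f u) = gdegree V E u"
proof -
  have "{w \<in> W. E' (f u) w} = f ` {w \<in> V. E u w}"
    using assms adj_iff image_eq by auto
  then show ?thesis
    unfolding gdegree_def by (simp add: card_image inj_on_subset[OF inj])
qed

lemma pair_dist_eq:
  assumes "e \<subseteq> V"
  shows "pair_dist W E' (f ` e) = pair_dist V E e"
proof -
  have "(\<exists>x y. f ` e = {x, y} \<and> x \<noteq> y \<and> d = gdist W E' x y) \<longleftrightarrow>
        (\<exists>x y. e = {x, y} \<and> x \<noteq> y \<and> d = gdist V E x y)" for d
  proof
    assume "\<exists>x y. f ` e = {x, y} \<and> x \<noteq> y \<and> d = gdist W E' x y"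
    then obtain x y where xy: "f ` e = {x, y}" "x \<noteq> y" "d = gdist W E' x y" by blast
    then obtain x' y' where "x' \<in> e" "y' \<in> e" "x = f x'" "y = f y'"
      by (metis imageE insertI1 insert_commute)
    moreover from this have "e = {x', y'}"
      using xy(1) assms inj inj_on_image_eq_iff[of f V e "{x', y'}"] by auto
    ultimately show "\<exists>x y. e = {x, y} \<and> x \<noteq> y \<and> d = gdist V E x y"
      using xy assms gdist_eq by auto
  next
    assume "\<exists>x y. e = {x, y} \<and> x \<noteq> y \<and> d = gdist V E x y"
    then obtain x y where "e = {x, y}" "x \<noteq> y" "d = gdist V E x y" by blast
    then show "\<exists>x y. f ` e = {x, y} \<and> x \<noteq> y \<and> d = gdist W E' x y"
      using assms inj gdist_eq by (intro exI[of _ "f x"] exI[of _ "f y"]) (auto dest: inj_onD)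
  qed
  then show ?thesis by (simp add: pair_dist_def)
qed

lemma deg_pairs_eq: "deg_pairs W E' p = (`) f ` deg_pairs V E p"
proof (intro equalityI subsetI)
  fix e assume "e \<in> deg_pairs W E' p"
  then obtain x y where "e = {f x, f y}" "x \<in> V" "y \<in> V" "f x \<noteq> f y"
      "gdegree W E' (f x) = p" "gdegree W E' (f y) = p"
    unfolding deg_pairs_def by (auto simp flip: image_eq)
  then have "{x, y} \<in> deg_pairs V E p" "e = f ` {x, y}"
    unfolding deg_pairs_def by (auto simp: gdegree_eq)
  then show "e \<in> (`) f ` deg_pairs V E p"
    by blast
next
  fix e assume "e \<in> (`) f ` deg_pairs V E p"
  then obtain x y where "e = {f x, f y}" "x \<in> V" "y \<in> V" "x \<noteq> y"
      "gdegree V E x = p" "gdegree V E y = p"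
    unfolding deg_pairs_def by auto
  moreover have "f x \<in> W" "f y \<in> W" using \<open>x \<in> V\<close> \<open>y \<in> V\<close> image_eq by auto
  ultimately show "e \<in> deg_pairs W E' p"
    unfolding deg_pairs_def using inj
    by (intro CollectI exI[of _ "f x"] exI[of _ "f y"]) (auto simp: gdegree_eq inj_on_eq_iff)
qed

lemma base_poly_eq: "base_poly W E' p = base_poly V E p"
proof -
  have "inj_on ((`) f) (deg_pairs V E p)"
  proof (rule inj_onI)
    fix e e' assume "e \<in> deg_pairs V E p" "e' \<in> deg_pairs V E p" "f ` e = f ` e'"
    moreover from this have "e \<subseteq> V" "e' \<subseteq> V" by (simp_all add: deg_pairs_subset)
    ultimately show "e = e'" using inj_on_image_eq_iff[OF inj] by simp
  qed
  then have "base_poly W E' p = (\<Sum>e\<in>deg_pairs V E p. monom 1 (pair_dist W E' (f ` e)))"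
    by (simp add: base_poly_def deg_pairs_eq sum.reindex)
  also have "\<dots> = base_poly V E p"
    unfolding base_poly_def
  proof (rule sum.cong)
    fix e assume "e \<in> deg_pairs V E p"
    then have "e \<subseteq> V" by (rule deg_pairs_subset)
    then show "monom 1 (pair_dist W E' (f ` e)) = monom 1 (pair_dist V E e)"
      by (simp add: pair_dist_eq)
  qed simp
  finally show ?thesis .
qed

end

section \<open>Sums over unordered pairs\<close>

lemma sum_doubletons_image:
  fixes g :: "'a::linorder \<Rightarrow> 'b"
  assumes "finite A" "inj_on g A"
  shows "(\<Sum>e\<in>{{x, y} | x y. x \<in> g ` A \<and> y \<in> g ` A \<and> x \<noteq> y}. h e) =
         (\<Sum>v\<in>A. \<Sum>u\<in>{u \<in> A. u < v}. h {g u, g v})"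
proof -
  let ?S = "SIGMA v:A. {u \<in> A. u < v}"
  let ?pair = "\<lambda>(v, u). {g u, g v}"
  have pairs: "{{x, y} | x y. x \<in> g ` A \<and> y \<in> g ` A \<and> x \<noteq> y} = ?pair ` ?S"
  proof (intro equalityI subsetI)
    fix e assume "e \<in> {{x, y} | x y. x \<in> g ` A \<and> y \<in> g ` A \<and> x \<noteq> y}"
    then obtain u v where uv: "e = {g u, g v}" "u \<in> A" "v \<in> A" "u \<noteq> v" by blast
    then consider "u < v" | "v < u" by (meson linorder_neqE)
    then show "e \<in> ?pair ` ?S"
    proof cases
      case 1
      then have "e = ?pair (v, u)" "(v, u) \<in> ?S" using uv by auto
      then show ?thesis by (rule image_eqI)
    next
      case 2
      then have "e = ?pair (u, v)" "(u, v) \<in> ?S" using uv by (auto simp: insert_commute)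
      then show ?thesis by (rule image_eqI)
    qed
  next
    fix e assume "e \<in> ?pair ` ?S"
    then obtain u v where uv: "e = {g u, g v}" "u \<in> A" "v \<in> A" "u < v" by auto
    then have "g u \<noteq> g v" using inj_onD[OF assms(2)] by fastforce
    then show "e \<in> {{x, y} | x y. x \<in> g ` A \<and> y \<in> g ` A \<and> x \<noteq> y}" using uv by blast
  qed
  have "inj_on ?pair ?S"
  proof (rule inj_onI)
    fix p q assume p: "p \<in> ?S" and q: "q \<in> ?S" and eq: "?pair p = ?pair q"
    obtain v u v' u' where pq: "p = (v, u)" "q = (v', u')" by fastforce
    then have uv: "u \<in> A" "v \<in> A" "u < v" "u' \<in> A" "v' \<in> A" "u' < v'" using p q by auto
    have "{g u, g v} = {g u', g v'}" using eq pq by simp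
    then have "(g u = g u' \<and> g v = g v') \<or> (g u = g v' \<and> g v = g u')" by (simp add: doubleton_eq_iff)
    then have "(u = u' \<and> v = v') \<or> (u = v' \<and> v = u')" using inj_onD[OF assms(2)] uv by blast
    then show "p = q" using uv pq by auto
  qed
  then have "(\<Sum>e\<in>?pair ` ?S. h e) = (\<Sum>(v, u)\<in>?S. h {g u, g v})"
    by (simp add: sum.reindex split_def)
  then show ?thesis
    using assms(1) by (simp add: pairs sum.Sigma)
qed

lemma sum_lex_less_times_bool:
  fixes A :: "'a::linorder set"
  assumes "finite A"
  shows "(\<Sum>v\<in>A \<times> UNIV. \<Sum>u\<in>{u \<in> A \<times> UNIV. u < v}. F u v) =
         (\<Sum>j\<in>A. F (j, False) (j, True) + (\<Sum>k\<in>{k \<in> A. k < j}. \<Sum>s\<in>UNIV. \<Sum>t\<in>UNIV. F (k, s) (j, t)))"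
proof -
  have below: "{u \<in> A \<times> UNIV. u < (j, t)} =
      {k \<in> A. k < j} \<times> UNIV \<union> (if t then {(j, False)} else {})" if "j \<in> A" for j t
    using that by (auto simp: less_prod_def' less_bool_def)
  have inner: "(\<Sum>u\<in>{u \<in> A \<times> UNIV. u < (j, t)}. F u (j, t)) =
      (\<Sum>k\<in>{k \<in> A. k < j}. \<Sum>s\<in>UNIV. F (k, s) (j, t)) + (if t then F (j, False) (j, True) else 0)"
    if "j \<in> A" for j t
    using assms that by (cases t) (simp_all add: below sum.cartesian_product sum.union_disjoint add.commute)
  have "(\<Sum>v\<in>A \<times> UNIV. \<Sum>u\<in>{u \<in> A \<times> UNIV. u < v}. F u v) =
      (\<Sum>j\<in>A. \<Sum>t\<in>UNIV. \<Sum>u\<in>{u \<in> A \<times> UNIV. u < (j, t)}. F u (j, t))"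
    by (simp add: sum.cartesian_product split_def)
  also have "\<dots> = (\<Sum>j\<in>A. \<Sum>t\<in>UNIV.
      (\<Sum>k\<in>{k \<in> A. k < j}. \<Sum>s\<in>UNIV. F (k, s) (j, t)) + (if t then F (j, False) (j, True) else 0))"
    using inner by simp
  finally show ?thesis
    by (simp add: UNIV_bool sum.distrib algebra_simps)
qed

lemma sum_lessThan_minus:
  fixes g :: "nat \<Rightarrow> 'a::comm_monoid_add"
  shows "(\<Sum>k<m. g (m - k)) = (\<Sum>d=1..m. g d)"
proof -
  have "(\<Sum>k<m. g (m - k)) = (\<Sum>d=1..m. g (m - (m - d)))"
    using sum.atLeastLessThan_rev_at_least_Suc_atMost[of "\<lambda>k. g (m - k)" 0 m]
    by (simp add: lessThan_atLeast0)
  also have "\<dots> = (\<Sum>d=1..m. g d)"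
    by (rule sum.cong) auto
  finally show ?thesis .
qed

lemma sum_pairs_diff:
  fixes g :: "nat \<Rightarrow> 'a::comm_semiring_1"
  shows "(\<Sum>j<m. \<Sum>k<j. g (j - k)) = (\<Sum>d=1..m. of_nat (m - d) * g d)"
proof (induction m)
  case (Suc m)
  have "(\<Sum>d=1..Suc m. of_nat (Suc m - d) * g d) = (\<Sum>d=1..m. of_nat (Suc m - d) * g d)"
    by simp
  also have "\<dots> = (\<Sum>d=1..m. of_nat (m - d) * g d) + (\<Sum>d=1..m. g d)"
    by (simp add: Suc_diff_le sum.distrib algebra_simps)
  finally show ?case
    using Suc by (simp add: sum_lessThan_minus)
qed simp

section \<open>The ladder with missing rungs\<close>

definition ladder_verts :: "nat \<Rightarrow> (nat \<times> bool) set" where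
  "ladder_verts n = {2..3*n} \<times> UNIV"

lemma mem_ladder_verts: "(x, s) \<in> ladder_verts n \<longleftrightarrow> 2 \<le> x \<and> x \<le> 3*n"
  by (simp add: ladder_verts_def)

fun ladder_adj :: "nat \<times> bool \<Rightarrow> nat \<times> bool \<Rightarrow> bool" where
  "ladder_adj (x, s) (y, t) \<longleftrightarrow>
     (s = t \<and> (y = Suc x \<or> x = Suc y)) \<or> (s \<noteq> t \<and> x = y \<and> x mod 3 \<noteq> 1)"

fun ladder_dist :: "nat \<times> bool \<Rightarrow> nat \<times> bool \<Rightarrow> nat" where
  "ladder_dist (x, s) (y, t) =
     (if x \<le> y then y - x else x - y) + (if s = t then 0 else if x = y \<and> x mod 3 = 1 then 3 else 1)"

lemma ladder_dist_edge:
  assumes "ladder_adj v w"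
  shows "ladder_dist u w \<le> ladder_dist u v + 1"
proof -
  obtain a b x s y t where [simp]: "u = (a, b)" "v = (x, s)" "w = (y, t)" by (metis prod.exhaust)
  show ?thesis using assms by (cases b; cases s; cases t) (auto split: if_splits)
qed

lemma ladder_dist_pred:
  assumes "u \<in> ladder_verts n" "w \<in> ladder_verts n" "w \<noteq> u"
  shows "\<exists>v\<in>ladder_verts n. ladder_adj v w \<and> ladder_dist u v + 1 = ladder_dist u w"
proof -
  obtain a b x s where uw: "u = (a, b)" "w = (x, s)" by fastforce
  have ax: "2 \<le> a" "a \<le> 3*n" "2 \<le> x" "x \<le> 3*n" "(x, s) \<noteq> (a, b)"
    using assms by (auto simp: uw mem_ladder_verts)
  have step: "ladder_adj (y, t) (x, s) \<and> ladder_dist (a, b) (y, t) + 1 = ladder_dist (a, b) (x, s)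
      \<Longrightarrow> 2 \<le> y \<Longrightarrow> y \<le> 3*n \<Longrightarrow> ?thesis" for y t
    unfolding uw mem_ladder_verts by (intro bexI[of _ "(y, t)"]) (simp_all add: mem_ladder_verts)
  show ?thesis
  proof (cases "s = b")
    case True
    show ?thesis
    proof (cases "x < a")
      case True
      then show ?thesis using \<open>s = b\<close> ax by (intro step[of "Suc x" s]) auto
    next
      case False
      then show ?thesis using \<open>s = b\<close> ax by (intro step[of "x - 1" s]) auto
    qed
  next
    case False
    show ?thesis
    proof (cases "x mod 3 = 1")
      case False
      then show ?thesis using \<open>s \<noteq> b\<close> ax by (intro step[of x b]) auto
    next
      case True
      then have x: "3 \<le> x" "x < 3*n" using ax by presburger+
      show ?thesis
      proof (cases "x \<le> a")
        case True
        then show ?thesis using \<open>s \<noteq> b\<close> \<open>x mod 3 = 1\<close> x by (intro step[of "Suc x" s]) (auto simp: mod_Suc)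
      next
        case False
        have "(x - 1) mod 3 = 0" using \<open>x mod 3 = 1\<close> x by presburger
        then show ?thesis using \<open>s \<noteq> b\<close> \<open>x mod 3 = 1\<close> x False ax
          by (intro step[of "x - 1" s]) auto
      qed
    qed
  qed
qed

lemma ladder_gdist:
  assumes "u \<in> ladder_verts n" "v \<in> ladder_verts n"
  shows "gdist (ladder_verts n) ladder_adj u v = ladder_dist u v"
proof (rule gdist_eqI[OF assms])
  show "ladder_dist u u = 0" by (cases u) simp
  show "ladder_dist u y \<le> ladder_dist u x + 1" if "ladder_adj x y" for x y
    using that by (rule ladder_dist_edge)
  show "\<exists>x\<in>ladder_verts n. ladder_adj x y \<and> ladder_dist u x + 1 = ladder_dist u y"
    if "y \<in> ladder_verts n" "y \<noteq> u" for y
    using assms(1) that by (rule ladder_dist_pred)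
qed

lemma ladder_dist_commute: "ladder_dist u v = ladder_dist v u"
  by (cases u; cases v) auto

lemma ladder_gdegree:
  assumes "(x, s) \<in> ladder_verts n"
  shows "gdegree (ladder_verts n) ladder_adj (x, s) = (if x = 2 \<or> x = 3*n \<or> x mod 3 = 1 then 2 else 3)"
proof -
  have x: "2 \<le> x" "x \<le> 3*n" "1 \<le> n" using assms by (auto simp: ladder_verts_def)
  let ?N = "{w \<in> ladder_verts n. ladder_adj (x, s) w}"
  consider "x = 2" | "x = 3*n" | "x \<noteq> 2" "x \<noteq> 3*n" "x mod 3 = 1"
    | "x \<noteq> 2" "x \<noteq> 3*n" "x mod 3 \<noteq> 1" by blast
  then show ?thesis
  proof cases
    case 1
    then have "?N = {(3, s), (2, \<not> s)}" using x by (auto simp: ladder_verts_def)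
    then show ?thesis using 1 by (simp add: gdegree_def)
  next
    case 2
    then have "?N = {(3*n - 1, s), (3*n, \<not> s)}" using x by (auto simp: ladder_verts_def)
    then show ?thesis using 2 x by (simp add: gdegree_def)
  next
    case 3
    then have "?N = {(x - 1, s), (x + 1, s)}" using x by (auto simp: ladder_verts_def)
    then show ?thesis using 3 x by (simp add: gdegree_def)
  next
    case 4
    then have "?N = {(x - 1, s), (x + 1, s), (x, \<not> s)}" using x by (auto simp: ladder_verts_def)
    then show ?thesis using 4 x by (simp add: gdegree_def)
  qed
qed

definition deg2_pos :: "nat \<Rightarrow> nat \<Rightarrow> nat" where
  "deg2_pos n k = (if k = 0 then 2 else if k = n then 3*n else 3*k + 1)"

lemma deg2_pos_less: "1 \<le> n \<Longrightarrow> k < j \<Longrightarrow> j \<le> n \<Longrightarrow> deg2_pos n k < deg2_pos n j"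
  by (auto simp: deg2_pos_def)

lemma inj_on_deg2_pos: "1 \<le> n \<Longrightarrow> inj_on (deg2_pos n) {..n}"
  by (rule strict_mono_on_imp_inj_on) (auto simp: strict_mono_on_def deg2_pos_less)

lemma ladder_deg2_verts:
  assumes "1 \<le> n"
  shows "{v \<in> ladder_verts n. gdegree (ladder_verts n) ladder_adj v = 2} = deg2_pos n ` {..n} \<times> UNIV"
proof -
  have pos_iff: "(2 \<le> x \<and> x \<le> 3*n \<and> (x = 2 \<or> x = 3*n \<or> x mod 3 = 1)) \<longleftrightarrow> x \<in> deg2_pos n ` {..n}"
    for x
  proof
    assume "2 \<le> x \<and> x \<le> 3*n \<and> (x = 2 \<or> x = 3*n \<or> x mod 3 = 1)"
    then have "x = deg2_pos n 0 \<or> x = deg2_pos n n \<or> (x = deg2_pos n (x div 3) \<and> x div 3 \<le> n)"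
      using assms by (auto simp: deg2_pos_def) presburger+
    then show "x \<in> deg2_pos n ` {..n}" by blast
  qed (use assms in \<open>auto simp: deg2_pos_def\<close>)
  show ?thesis
  proof (intro set_eqI)
    fix v :: "nat \<times> bool"
    obtain x s where "v = (x, s)" by fastforce
    then show "v \<in> {v \<in> ladder_verts n. gdegree (ladder_verts n) ladder_adj v = 2} \<longleftrightarrow>
        v \<in> deg2_pos n ` {..n} \<times> UNIV"
      using pos_iff[of x] by (auto simp: ladder_gdegree mem_ladder_verts)
  qed
qed

lemma ladder_pair_dist:
  assumes "u \<in> ladder_verts n" "v \<in> ladder_verts n" "u \<noteq> v"
  shows "pair_dist (ladder_verts n) ladder_adj {u, v} = ladder_dist u v"
  using assms by (simp add: pair_dist_doubleton ladder_gdist ladder_dist_commute)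

lemma deg2_pos_mem_ladder_verts: "1 \<le> n \<Longrightarrow> k \<le> n \<Longrightarrow> (deg2_pos n k, s) \<in> ladder_verts n"
  by (auto simp: deg2_pos_def mem_ladder_verts)

lemma ladder_pair_dist_deg2_pos_less:
  assumes "1 \<le> n" "k < j" "j \<le> n"
  shows "pair_dist (ladder_verts n) ladder_adj {(deg2_pos n k, s), (deg2_pos n j, t)} =
    deg2_pos n j - deg2_pos n k + (if s = t then 0 else 1)"
proof -
  have "(deg2_pos n k, s) \<noteq> (deg2_pos n j, t)" using deg2_pos_less[OF assms] by simp
  moreover have "(deg2_pos n k, s) \<in> ladder_verts n" "(deg2_pos n j, t) \<in> ladder_verts n"
    using assms by (simp_all add: deg2_pos_mem_ladder_verts)
  ultimately have "pair_dist (ladder_verts n) ladder_adj {(deg2_pos n k, s), (deg2_pos n j, t)} =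
      ladder_dist (deg2_pos n k, s) (deg2_pos n j, t)"
    by (intro ladder_pair_dist)
  also have "\<dots> = deg2_pos n j - deg2_pos n k + (if s = t then 0 else 1)"
    using deg2_pos_less[OF assms] by simp
  finally show ?thesis .
qed

lemma ladder_pair_dist_deg2_pos_rung:
  assumes "1 \<le> n" "j \<le> n"
  shows "pair_dist (ladder_verts n) ladder_adj {(deg2_pos n j, False), (deg2_pos n j, True)} =
    (if j = 0 \<or> j = n then 1 else 3)"
proof -
  have "(deg2_pos n j, False) \<in> ladder_verts n" "(deg2_pos n j, True) \<in> ladder_verts n"
    using assms by (simp_all add: deg2_pos_mem_ladder_verts)
  then have "pair_dist (ladder_verts n) ladder_adj {(deg2_pos n j, False), (deg2_pos n j, True)} =
      ladder_dist (deg2_pos n j, False) (deg2_pos n j, True)"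
    by (intro ladder_pair_dist) simp_all
  also have "\<dots> = (if j = 0 \<or> j = n then 1 else 3)"
    by (simp add: deg2_pos_def)
  finally show ?thesis .
qed

lemma ladder_deg_pairs:
  assumes "1 \<le> n"
  shows "deg_pairs (ladder_verts n) ladder_adj 2 =
    {{x, y} | x y. x \<in> map_prod (deg2_pos n) id ` ({..n} \<times> UNIV) \<and>
                   y \<in> map_prod (deg2_pos n) id ` ({..n} \<times> UNIV) \<and> x \<noteq> y}"
proof -
  have deg2: "{v \<in> ladder_verts n. gdegree (ladder_verts n) ladder_adj v = 2} =
      map_prod (deg2_pos n) id ` ({..n} \<times> UNIV)"
    unfolding ladder_deg2_verts[OF assms] by (rule map_prod_surj_on[symmetric]) simp_all
  show ?thesis
    unfolding deg_pairs_def deg2[symmetric] by blast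
qed

text \<open>The \<open>j\<close>-th pair of degree-2 vertices, at position \<open>deg2_pos n j\<close>, contributes \<open>x\<close> or
  \<open>x\<^sup>3\<close>; together with the \<open>k\<close>-th pair, \<open>k < j\<close>, it forms four pairs of vertices contributing
  \<open>2x\<^sup>d + 2x\<^sup>d\<^sup>+\<^sup>1\<close>, where \<open>d\<close> is the difference of the two positions.\<close>

definition deg2_dist_poly :: "nat \<Rightarrow> nat poly" where
  "deg2_dist_poly n =
    (\<Sum>j\<le>n. monom 1 (if j = 0 \<or> j = n then 1 else 3) +
       (\<Sum>k<j. monom 2 (deg2_pos n j - deg2_pos n k) + monom 2 (Suc (deg2_pos n j - deg2_pos n k))))"

lemma ladder_base_poly:
  assumes "1 \<le> n"
  shows "base_poly (ladder_verts n) ladder_adj 2 = deg2_dist_poly n"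
proof -
  let ?g = "map_prod (deg2_pos n) (id :: bool \<Rightarrow> bool)"
  let ?F = "\<lambda>u v. monom (1::nat) (pair_dist (ladder_verts n) ladder_adj {?g u, ?g v})"
  have inj: "inj_on ?g ({..n} \<times> UNIV)"
    using inj_on_deg2_pos[OF assms] by (rule map_prod_inj_on) simp
  have "base_poly (ladder_verts n) ladder_adj 2 =
      (\<Sum>v\<in>{..n} \<times> UNIV. \<Sum>u\<in>{u \<in> {..n} \<times> UNIV. u < v}. ?F u v)"
    unfolding base_poly_def ladder_deg_pairs[OF assms] by (rule sum_doubletons_image) (simp_all add: inj)
  also have "\<dots> = (\<Sum>j\<le>n. ?F (j, False) (j, True) +
      (\<Sum>k\<in>{k \<in> {..n}. k < j}. \<Sum>s\<in>UNIV. \<Sum>t\<in>UNIV. ?F (k, s) (j, t)))"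
    by (rule sum_lex_less_times_bool) simp
  also have "\<dots> = deg2_dist_poly n"
    unfolding deg2_dist_poly_def
  proof (rule sum.cong)
    fix j assume j: "j \<in> {..n}"
    have monom_2: "monom (2::nat) d = monom 1 d + monom 1 d" for d
      by (simp add: add_monom)
    have "(\<Sum>s\<in>UNIV. \<Sum>t\<in>UNIV. ?F (k, s) (j, t)) =
        monom 2 (deg2_pos n j - deg2_pos n k) + monom 2 (Suc (deg2_pos n j - deg2_pos n k))"
      if "k < j" for k
      using that j assms
      by (simp add: UNIV_bool ladder_pair_dist_deg2_pos_less monom_2 add_ac)
    moreover have "{k \<in> {..n}. k < j} = {..<j}" using j by auto
    ultimately show "?F (j, False) (j, True) + (\<Sum>k\<in>{k \<in> {..n}. k < j}. \<Sum>s\<in>UNIV. \<Sum>t\<in>UNIV. ?F (k, s) (j, t)) =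
        monom 1 (if j = 0 \<or> j = n then 1 else 3) +
        (\<Sum>k<j. monom 2 (deg2_pos n j - deg2_pos n k) + monom 2 (Suc (deg2_pos n j - deg2_pos n k)))"
      using j assms by (simp add: ladder_pair_dist_deg2_pos_rung)
  qed simp
  finally show ?thesis .
qed

section \<open>The closed form\<close>

lemma sum_deg2_pos_diffs:
  fixes g :: "nat \<Rightarrow> 'a::comm_semiring_1"
  shows "(\<Sum>j\<le>Suc m. \<Sum>k<j. g (deg2_pos (Suc m) j - deg2_pos (Suc m) k)) =
    g (3*m + 1) + 2 * (\<Sum>d=1..m. g (3*d - 1)) + (\<Sum>d=1..m. of_nat (m - d) * g (3*d))"
proof -
  let ?p = "deg2_pos (Suc m)"
  have interior: "(\<Sum>j\<le>m. \<Sum>k<j. g (?p j - ?p k)) = (\<Sum>j<m. g (3*j + 2) + (\<Sum>k<j. g (3 * (j - k))))"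
  proof -
    have "(\<Sum>j\<le>m. \<Sum>k<j. g (?p j - ?p k)) = (\<Sum>j<m. \<Sum>k<Suc j. g (?p (Suc j) - ?p k))"
      by (simp add: sum.atMost_shift)
    also have "\<dots> = (\<Sum>j<m. g (3*j + 2) + (\<Sum>k<j. g (3 * (j - k))))"
    proof (rule sum.cong)
      fix j assume "j \<in> {..<m}"
      then have "(\<Sum>k<j. g (?p (Suc j) - ?p (Suc k))) = (\<Sum>k<j. g (3 * (j - k)))"
        by (intro sum.cong refl) (auto simp: deg2_pos_def diff_mult_distrib2)
      then show "(\<Sum>k<Suc j. g (?p (Suc j) - ?p k)) = g (3*j + 2) + (\<Sum>k<j. g (3 * (j - k)))"
        using \<open>j \<in> {..<m}\<close> by (simp add: sum.lessThan_Suc_shift deg2_pos_def del: sum.lessThan_Suc)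
    qed simp
    finally show ?thesis .
  qed
  have last: "(\<Sum>k<Suc m. g (?p (Suc m) - ?p k)) = g (3*m + 1) + (\<Sum>d=1..m. g (3*d - 1))"
  proof -
    have "(\<Sum>k<Suc m. g (?p (Suc m) - ?p k)) = g (3*m + 1) + (\<Sum>k<m. g (?p (Suc m) - ?p (Suc k)))"
      by (simp add: sum.lessThan_Suc_shift deg2_pos_def del: sum.lessThan_Suc)
    also have "(\<Sum>k<m. g (?p (Suc m) - ?p (Suc k))) = (\<Sum>k<m. (\<lambda>d. g (3*d - 1)) (m - k))"
      by (intro sum.cong refl) (auto simp: deg2_pos_def diff_mult_distrib2)
    also have "\<dots> = (\<Sum>d=1..m. g (3*d - 1))"
      by (rule sum_lessThan_minus)
    finally show ?thesis .
  qed
  have shift: "(\<Sum>j<m. g (3*j + 2)) = (\<Sum>d=1..m. g (3*d - 1))"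
    by (induction m) auto
  have pairs: "(\<Sum>j<m. \<Sum>k<j. g (3 * (j - k))) = (\<Sum>d=1..m. of_nat (m - d) * g (3*d))"
    using sum_pairs_diff[of "\<lambda>d. g (3*d)"] by simp
  have "(\<Sum>j\<le>Suc m. \<Sum>k<j. g (?p j - ?p k)) =
      (\<Sum>j\<le>m. \<Sum>k<j. g (?p j - ?p k)) + (\<Sum>k<Suc m. g (?p (Suc m) - ?p k))"
    by (rule sum.atMost_Suc)
  also have "\<dots> = (\<Sum>j<m. g (3*j + 2)) + (\<Sum>j<m. \<Sum>k<j. g (3 * (j - k))) +
      (g (3*m + 1) + (\<Sum>d=1..m. g (3*d - 1)))"
    by (simp only: interior last sum.distrib)
  finally show ?thesis
    unfolding shift pairs by (simp only: mult_2 add_ac)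
qed

lemma sum_rung_monoms:
  "(\<Sum>j\<le>Suc m. monom (1::nat) (if j = 0 \<or> j = Suc m then 1 else 3)) = monom 2 1 + monom m 3"
proof -
  let ?r = "\<lambda>j. monom (1::nat) (if j = 0 \<or> j = Suc m then 1 else 3)"
  have "(\<Sum>j\<le>Suc m. ?r j) = ?r 0 + (\<Sum>j<m. ?r (Suc j)) + ?r (Suc m)"
    by (simp only: sum.atMost_shift sum.lessThan_Suc add.assoc)
  also have "(\<Sum>j<m. ?r (Suc j)) = (\<Sum>j<m. monom 1 3)"
    by (intro sum.cong) auto
  also have "\<dots> = monom m 3"
    by (simp add: of_nat_monom mult_monom)
  finally show ?thesis
    by (simp add: add_monom add_ac)
qed

lemma of_nat_mult_monom: "of_nat c * monom (a::nat) d = monom (c * a) d"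
  by (simp add: of_nat_monom mult_monom)

lemma sum_monom_index_shift:
  "(\<Sum>k=2..Suc p. monom (2*(Suc (Suc p) - k)) (3*k - 2)) =
   (\<Sum>d=1..Suc p. monom (2*(Suc p - d)) (Suc (3*d)) :: nat poly)"
proof -
  have "(\<Sum>k=Suc 1..Suc p. monom (2*(Suc (Suc p) - k)) (3*k - 2)) =
      (\<Sum>d=1..p. monom (2*(Suc p - d)) (Suc (3*d)) :: nat poly)"
    by (simp only: sum.shift_bounds_cl_Suc_ivl) simp
  then show ?thesis
    by (simp add: numeral_2_eq_2)
qed

lemma sum_monom_split_first:
  "monom (3*Suc m - 1) 3 + (\<Sum>k=2..m. monom (2*(Suc m - k + 1)) (3*k)) =
   monom m 3 + (\<Sum>d=1..m. monom (4 + 2*(m - d)) (3*d) :: nat poly)" if "1 \<le> m"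
proof -
  have "(\<Sum>d=1..m. monom (4 + 2*(m - d)) (3*d) :: nat poly) =
      monom (2*m + 2) 3 + (\<Sum>k=2..m. monom (2*(Suc m - k + 1)) (3*k))"
  proof -
    have "(\<Sum>k=Suc 1..m. monom (4 + 2*(m - k)) (3*k) :: nat poly) =
        (\<Sum>k=2..m. monom (2*(Suc m - k + 1)) (3*k))"
      by (intro sum.cong) auto
    then show ?thesis
      using that by (simp add: sum.atLeast_Suc_atMost)
  qed
  moreover have "monom (3*Suc m - 1) 3 = monom m 3 + monom (2*m + 2) (3::nat)"
    by (simp add: add_monom)
  ultimately show ?thesis
    by (simp only: add.assoc)
qed

lemma monom_pairs_combine:
  assumes "1 \<le> d"
  shows "2 * (monom 2 (3*d - 1) + monom 2 (Suc (3*d - 1))) + of_nat c * (monom 2 (3*d) + monom 2 (Suc (3*d))) =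
    (monom 4 (3*d - 1) :: nat poly) + monom (4 + 2*c) (3*d) + monom (2*c) (Suc (3*d))"
proof -
  have double: "of_nat k * (monom 2 a + monom 2 b) = (monom (2*k) a :: nat poly) + monom (2*k) b" for k a b
    by (simp add: distrib_left of_nat_mult_monom mult.commute)
  have "Suc (3*d - 1) = 3*d" using assms by simp
  then show ?thesis
    using double[of 2] double[of c] by (simp add: add_monom[symmetric] add.assoc)
qed

lemma deg2_dist_poly_Suc:
  "deg2_dist_poly (Suc m) = monom 2 1 + monom m 3 + (monom 2 (3*m + 1) + monom 2 (3*m + 2))
    + (\<Sum>d=1..m. monom 4 (3*d - 1) + monom (4 + 2*(m - d)) (3*d) + monom (2*(m - d)) (3*d + 1))"
proof -
  have "deg2_dist_poly (Suc m) =
      (\<Sum>j\<le>Suc m. monom 1 (if j = 0 \<or> j = Suc m then 1 else 3)) +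
      (\<Sum>j\<le>Suc m. \<Sum>k<j. monom 2 (deg2_pos (Suc m) j - deg2_pos (Suc m) k) +
         monom 2 (Suc (deg2_pos (Suc m) j - deg2_pos (Suc m) k)))"
    unfolding deg2_dist_poly_def by (rule sum.distrib)
  also have "\<dots> = monom 2 1 + monom m 3 + (monom 2 (3*m + 1) + monom 2 (Suc (3*m + 1)))
      + (2 * (\<Sum>d=1..m. monom 2 (3*d - 1) + monom 2 (Suc (3*d - 1)))
         + (\<Sum>d=1..m. of_nat (m - d) * (monom 2 (3*d) + monom 2 (Suc (3*d)))))"
    unfolding sum_rung_monoms sum_deg2_pos_diffs[of "\<lambda>d. monom 2 d + monom 2 (Suc d)" m]
    by (simp only: add.assoc)
  also have "2 * (\<Sum>d=1..m. monom 2 (3*d - 1) + monom 2 (Suc (3*d - 1)))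
         + (\<Sum>d=1..m. of_nat (m - d) * (monom 2 (3*d) + monom 2 (Suc (3*d)))) =
      (\<Sum>d=1..m. monom 4 (3*d - 1) + monom (4 + 2*(m - d)) (3*d) + monom (2*(m - d)) (Suc (3*d)))"
    unfolding sum_distrib_left sum.distrib[symmetric] by (intro sum.cong refl monom_pairs_combine) simp
  finally show ?thesis
    by simp
qed

lemma deg2_dist_poly_closed_form:
  assumes "2 \<le> n"
  shows "deg2_dist_poly n =
      monom 2 1 + monom (3*n - 1) 3
    + (\<Sum>k=2..n-1. monom (2*(n-k)) (3*k - 2))
    + (\<Sum>k=1..n-1. monom 4 (3*k - 1))
    + (\<Sum>k=2..n-1. monom (2*(n-k+1)) (3*k))
    + monom 2 (3*n - 2) + monom 2 (3*n - 1)"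
proof -
  obtain p where n: "n = Suc (Suc p)" using assms by (metis add_2_eq_Suc le_Suc_ex)
  define m where "m = Suc p"
  have "deg2_dist_poly n =
      monom 2 1 + (monom m 3 + (\<Sum>d=1..m. monom (4 + 2*(m - d)) (3*d)))
      + (\<Sum>d=1..m. monom (2*(m - d)) (3*d + 1)) + (\<Sum>d=1..m. monom 4 (3*d - 1))
      + (monom 2 (3*m + 1) + monom 2 (3*m + 2))"
    unfolding n m_def[symmetric] deg2_dist_poly_Suc by (simp only: sum.distrib add_ac)
  also have "\<dots> = monom 2 1 + (monom (3*n - 1) 3 + (\<Sum>k=2..n-1. monom (2*(n-k+1)) (3*k)))
      + (\<Sum>k=2..n-1. monom (2*(n-k)) (3*k - 2)) + (\<Sum>k=1..n-1. monom 4 (3*k - 1))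
      + (monom 2 (3*n - 2) + monom 2 (3*n - 1))"
    using sum_monom_index_shift[of p] sum_monom_split_first[of m]
    by (simp add: n m_def)
  also have "\<dots> = monom 2 1 + monom (3*n - 1) 3
    + (\<Sum>k=2..n-1. monom (2*(n-k)) (3*k - 2))
    + (\<Sum>k=1..n-1. monom 4 (3*k - 1))
    + (\<Sum>k=2..n-1. monom (2*(n-k+1)) (3*k))
    + monom 2 (3*n - 2) + monom 2 (3*n - 1)"
    by (simp only: add_ac)
  finally show ?thesis .
qed

section \<open>\<open>L'\<^sub>n\<close> is a ladder\<close>

fun lvert_coord :: "nat \<Rightarrow> lvert \<Rightarrow> nat \<times> bool" where
  "lvert_coord n Pv = (2, True)"
| "lvert_coord n Qv = (2, False)"
| "lvert_coord n Rv = (3*n, True)"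
| "lvert_coord n Sv = (3*n, False)"
| "lvert_coord n (Fv i) = (3*i, True)"
| "lvert_coord n (Ev i) = (3*i, False)"
| "lvert_coord n (Av i) = (3*i + 1, True)"
| "lvert_coord n (Dv i) = (3*i + 1, False)"
| "lvert_coord n (Bv i) = (3*i + 2, True)"
| "lvert_coord n (Cv i) = (3*i + 2, False)"

fun ladder_lvert :: "nat \<Rightarrow> nat \<times> bool \<Rightarrow> lvert" where
  "ladder_lvert n (x, s) =
     (if x = 2 then (if s then Pv else Qv)
      else if x = 3*n then (if s then Rv else Sv)
      else if x mod 3 = 0 then (if s then Fv (x div 3) else Ev (x div 3))
      else if x mod 3 = 1 then (if s then Av (x div 3) else Dv (x div 3))
      else (if s then Bv (x div 3) else Cv (x div 3)))"

lemma mem_Lverts: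
  "Pv \<in> Lverts n" "Qv \<in> Lverts n" "Rv \<in> Lverts n" "Sv \<in> Lverts n"
  "Av i \<in> Lverts n \<longleftrightarrow> 1 \<le> i \<and> i \<le> n - 1"
  "Bv i \<in> Lverts n \<longleftrightarrow> 1 \<le> i \<and> i \<le> n - 1"
  "Cv i \<in> Lverts n \<longleftrightarrow> 1 \<le> i \<and> i \<le> n - 1"
  "Dv i \<in> Lverts n \<longleftrightarrow> 1 \<le> i \<and> i \<le> n - 1"
  "Ev i \<in> Lverts n \<longleftrightarrow> 1 \<le> i \<and> i \<le> n - 1"
  "Fv i \<in> Lverts n \<longleftrightarrow> 1 \<le> i \<and> i \<le> n - 1"
  by (auto simp: Lverts_def)

lemma mod_3_div_3_simps [simp]:
  "Suc (3*x) mod 3 = 1" "Suc (Suc (3*x)) mod 3 = 2"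
  "Suc (3*x) div 3 = x" "Suc (Suc (3*x)) div 3 = x"
  by presburger+

lemma ladder_lvert_coord:
  assumes "2 \<le> n" "u \<in> Lverts n"
  shows "lvert_coord n u \<in> ladder_verts n \<and> ladder_lvert n (lvert_coord n u) = u"
  using assms by (cases u) (auto simp: mem_Lverts mem_ladder_verts)

lemma lvert_coord_ladder_lvert:
  assumes "2 \<le> n" "v \<in> ladder_verts n"
  shows "ladder_lvert n v \<in> Lverts n \<and> lvert_coord n (ladder_lvert n v) = v"
proof -
  obtain x s where v: "v = (x, s)" by fastforce
  then have x: "2 \<le> x" "x \<le> 3*n" using assms(2) by (auto simp: mem_ladder_verts)
  consider "x = 2" | "x = 3*n" | "x \<noteq> 2" "x \<noteq> 3*n" "x mod 3 = 0"
    | "x \<noteq> 2" "x \<noteq> 3*n" "x mod 3 = 1" | "x \<noteq> 2" "x \<noteq> 3*n" "x mod 3 = 2" by linarith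
  then show ?thesis
  proof cases
    case 3
    then have "1 \<le> x div 3" "x div 3 \<le> n - 1" "3 * (x div 3) = x" using x by presburger+
    then show ?thesis using 3 v by (cases s) (auto simp: mem_Lverts)
  next
    case 4
    then have "1 \<le> x div 3" "x div 3 \<le> n - 1" "3 * (x div 3) + 1 = x" using x by presburger+
    then show ?thesis using 4 v by (cases s) (auto simp: mem_Lverts)
  next
    case 5
    then have "1 \<le> x div 3" "x div 3 \<le> n - 1" "3 * (x div 3) + 2 = x" using x by presburger+
    then show ?thesis using 5 v by (cases s) (auto simp: mem_Lverts)
  qed (use v in \<open>auto simp: mem_Lverts\<close>)
qed

lemma bij_betw_lvert_coord:
  assumes "2 \<le> n"
  shows "bij_betw (lvert_coord n) (Lverts n) (ladder_verts n)"
  using ladder_lvert_coord[OF assms] lvert_coord_ladder_lvert[OF assms]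
  by (intro bij_betw_byWitness[where f' = "ladder_lvert n"]) auto

lemma ladder_adj_lvert_coord:
  assumes "2 \<le> n" "u \<in> Lverts n" "v \<in> Lverts n"
  shows "ladder_adj (lvert_coord n u) (lvert_coord n v) \<longleftrightarrow> Ladj n u v"
  using assms
  by (cases u; cases v) (auto simp: mem_Lverts Ladj_def Ledges_def doubleton_eq_iff, presburger+)

theorem theorem2p4:
  fixes n :: nat
  assumes "n \<ge> 2"
  shows "base_poly (Lverts n) (Ladj n) 2 =
      monom 2 1 + monom (3*n - 1) 3
    + (\<Sum>k=2..n-1. monom (2*(n-k)) (3*k - 2))
    + (\<Sum>k=1..n-1. monom 4 (3*k - 1))
    + (\<Sum>k=2..n-1. monom (2*(n-k+1)) (3*k))
    + monom 2 (3*n - 2) + monom 2 (3*n - 1)"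
proof -
  interpret graph_iso "Lverts n" "Ladj n" "ladder_verts n" ladder_adj "lvert_coord n"
    using bij_betw_lvert_coord[OF assms] ladder_adj_lvert_coord[OF assms] by unfold_locales
  have "1 \<le> n" using assms by simp
  show ?thesis
    unfolding base_poly_eq[symmetric] ladder_base_poly[OF \<open>1 \<le> n\<close>]
    by (rule deg2_dist_poly_closed_form[OF assms])
qed

end
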